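(* For every $\alpha\in(0,1)\cup(1,\infty)$ and discrete memoryless channels $\mathcal W_1$ (from $\mathcal X_1$ to $\mathcal Y_1$) and $\mathcal W_2$ (from $\mathcal X_2$ to $\mathcal Y_2$), all alphabets finite, $U_\alpha(\mathcal W_1\times\mathcal W_2)=U_\alpha(\mathcal W_1)+U_\alpha(\mathcal W_2)$, where $(\mathcal W_1\times\mathcal W_2)(y_1,y_2|x_1,x_2)=\mathcal W_1(y_1|x_1)\mathcal W_2(y_2|x_2)$.
   Context: For $\alpha\in(0,1)\cup(1,\infty)$, $D_\alpha(P\|Q)=\frac1{\alpha-1}\log\sum_{x:P(x)>0}P(x)^\alpha Q(x)^{1-\alpha}$ ($+\infty$ if $\alpha>1$ and $P\not\ll Q$). For a channel $\mathcal W$, $U_\alpha(\mathcal W)=\max_{P_X}\min_{Q_Y}D_\alpha(P_X\times Q_Y\|P_{XY})$ with $P_{XY}(x,y)=P_X(x)\mathcal W(y|x)$. *)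

theory Defs
  imports "HOL-Analysis.Analysis"
begin

definition is_dist :: "('a::finite \<Rightarrow> real) \<Rightarrow> bool" where
  "is_dist P \<longleftrightarrow> (\<forall>x. 0 \<le> P x) \<and> (\<Sum>x\<in>UNIV. P x) = 1"

definition is_channel :: "('x::finite \<Rightarrow> 'y::finite \<Rightarrow> real) \<Rightarrow> bool" where
  "is_channel W \<longleftrightarrow> (\<forall>x. is_dist (W x))"

text \<open>It is infinite if alpha > 1 and P is not absolutely continuous w.r.t. Q;
  for alpha < 1 with vanishing sum, log 0 = -infinity times 1/(alpha-1) < 0 gives +infinity.\<close>
definition renyi_div :: "real \<Rightarrow> ('a::finite \<Rightarrow> real) \<Rightarrow> ('a \<Rightarrow> real) \<Rightarrow> ereal" where
  "renyi_div \<alpha> P Q =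
     (if \<alpha> > 1 \<and> \<not> (\<forall>x. P x > 0 \<longrightarrow> Q x > 0) then \<infinity>
      else (let s = (\<Sum>x\<in>{x. P x > 0}. P x powr \<alpha> * Q x powr (1 - \<alpha>))
            in if s = 0 then \<infinity> else ereal (ln s / (\<alpha> - 1))))"

definition U_alpha :: "real \<Rightarrow> ('x::finite \<Rightarrow> 'y::finite \<Rightarrow> real) \<Rightarrow> ereal" where
  "U_alpha \<alpha> W =
     (SUP P \<in> {P. is_dist P}. INF Q \<in> {Q. is_dist Q}.
        renyi_div \<alpha> (\<lambda>(x, y). P x * Q y) (\<lambda>(x, y). P x * W x y))"

definition prod_channel ::
  "('x1 \<Rightarrow> 'y1 \<Rightarrow> real) \<Rightarrow> ('x2 \<Rightarrow> 'y2 \<Rightarrow> real) \<Rightarrow> ('x1 \<times> 'x2) \<Rightarrow> ('y1 \<times> 'y2) \<Rightarrow> real" where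
  "prod_channel W1 W2 = (\<lambda>(x1, x2) (y1, y2). W1 x1 y1 * W2 x2 y2)"

end

theory Submission
  imports Defs
begin

text \<open>
  For a fixed input distribution P the minimisation over Q has a closed form. With
  c(y) = sum_x P(x) W(y|x)^(1-\<alpha>) one has
  D_\<alpha>(P \<times> Q || P_XY) = -ln ((sum_y Q(y)^\<alpha> c(y))^(1/(1-\<alpha>))),
  and Hoelder's inequality (reversed for \<alpha> > 1), with equality at Q proportional to
  c^(1/(1-\<alpha>)), shows that the minimum is -ln h(P) for h(P) = sum_y c(y)^(1/(1-\<alpha>));
  for \<alpha> > 1 the sum only runs over the outputs reachable from every input in the
  support of P. Thus U_\<alpha>(W) = sup_P -ln h(P).

  On product inputs P1 \<times> P2 the sum h of W1 \<times> W2 factorises, which gives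
  U_\<alpha>(W1 \<times> W2) \<ge> U_\<alpha>(W1) + U_\<alpha>(W2). Conversely, for an arbitrary joint input P the
  terms of h(P) with a fixed first output y1 add up to c1(y1)^(1/(1-\<alpha>)) times the sum h
  of W2 at the tilted input x2 \<mapsto> sum_x1 P(x1,x2) W1(y1|x1)^(1-\<alpha>) / c1(y1), where c1 is
  computed from the first marginal of P. Bounding the latter below by its infimum over all
  inputs gives h(P) \<ge> h1(P1) inf h2, which is the reverse inequality.
\<close>

section \<open>Hoelder's inequality and its equality case\<close>

lemma Youngs_inequality_nonneg:
  fixes u v p q :: real
  assumes "0 < p" "0 < q" "p + q = 1" "0 \<le> u" "0 \<le> v"
  shows "u powr p * v powr q \<le> p * u + q * v"
proof (cases "u = 0 \<or> v = 0")
  case True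
  then show ?thesis using assms by auto
next
  case False
  then show ?thesis using assms Youngs_inequality_0[of p q u v] by auto
qed

lemma Youngs_inequality_powr_upper_bound:
  fixes q c H \<alpha> :: real
  assumes \<alpha>: "0 < \<alpha>" "\<alpha> < 1" and q: "0 \<le> q" and c: "0 \<le> c" and H: "0 < H"
  shows "q powr \<alpha> * c \<le> H powr (1 - \<alpha>) * (\<alpha> * q + (1 - \<alpha>) * (c powr (1 / (1 - \<alpha>)) / H))"
proof -
  define t where "t = c powr (1 / (1 - \<alpha>)) / H"
  have "c = H powr (1 - \<alpha>) * t powr (1 - \<alpha>)"
    using H \<alpha> c by (simp add: t_def powr_divide powr_powr)
  then have "q powr \<alpha> * c = H powr (1 - \<alpha>) * (q powr \<alpha> * t powr (1 - \<alpha>))"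
    by (simp add: ac_simps)
  also have "\<dots> \<le> H powr (1 - \<alpha>) * (\<alpha> * q + (1 - \<alpha>) * t)"
    using \<alpha> q H by (intro mult_left_mono Youngs_inequality_nonneg) (auto simp: t_def)
  finally show ?thesis by (simp add: t_def)
qed

lemma sum_powr_mult_le_Hoelder:
  fixes Q c :: "'a \<Rightarrow> real"
  assumes A: "finite A" and \<alpha>: "0 < \<alpha>" "\<alpha> < 1"
    and Q: "\<And>y. y \<in> A \<Longrightarrow> 0 \<le> Q y" "(\<Sum>y\<in>A. Q y) = 1"
    and c: "\<And>y. y \<in> A \<Longrightarrow> 0 \<le> c y"
  shows "(\<Sum>y\<in>A. Q y powr \<alpha> * c y) \<le> (\<Sum>y\<in>A. c y powr (1 / (1 - \<alpha>))) powr (1 - \<alpha>)"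
proof -
  define H where "H = (\<Sum>y\<in>A. c y powr (1 / (1 - \<alpha>)))"
  show ?thesis
  proof (cases "H = 0")
    case True
    then have "c y = 0" if "y \<in> A" for y
      using A that unfolding H_def by (subst (asm) sum_nonneg_eq_0_iff) auto
    then show ?thesis using True by (simp add: H_def)
  next
    case False
    then have H: "0 < H" unfolding H_def by (simp add: less_le sum_nonneg)
    have "(\<Sum>y\<in>A. Q y powr \<alpha> * c y)
        \<le> (\<Sum>y\<in>A. H powr (1 - \<alpha>) * (\<alpha> * Q y + (1 - \<alpha>) * (c y powr (1 / (1 - \<alpha>)) / H)))"
      using \<alpha> Q(1) c H by (intro sum_mono Youngs_inequality_powr_upper_bound) auto
    also have "\<dots> = H powr (1 - \<alpha>) * (\<alpha> * (\<Sum>y\<in>A. Q y)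
        + (1 - \<alpha>) * ((\<Sum>y\<in>A. c y powr (1 / (1 - \<alpha>))) / H))"
      by (simp only: sum_distrib_left[symmetric] sum.distrib sum_divide_distrib)
    also have "\<dots> = H powr (1 - \<alpha>)"
      using Q(2) H by (simp add: H_def[symmetric])
    finally show ?thesis by (simp add: H_def)
  qed
qed

lemma Youngs_inequality_powr_lower_bound:
  fixes q c H \<alpha> :: real
  assumes \<alpha>: "1 < \<alpha>" and q: "0 \<le> q" and c: "0 < c" and H: "0 < H"
  shows "q \<le> 1 / \<alpha> * (q powr \<alpha> * c * H powr (\<alpha> - 1)) + (\<alpha> - 1) / \<alpha> * (c powr (1 / (1 - \<alpha>)) / H)"
proof -
  have "(q powr \<alpha> * c * H powr (\<alpha> - 1)) powr (1 / \<alpha>)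
      = q * c powr (1 / \<alpha>) * H powr ((\<alpha> - 1) / \<alpha>)"
    using \<alpha> q by (simp add: powr_mult powr_powr)
  moreover have "(c powr (1 / (1 - \<alpha>)) / H) powr ((\<alpha> - 1) / \<alpha>)
      = c powr (- (1 / \<alpha>)) / H powr ((\<alpha> - 1) / \<alpha>)"
  proof -
    have "1 / (1 - \<alpha>) * ((\<alpha> - 1) / \<alpha>) = - (1 / \<alpha>)"
      using \<alpha> by (simp add: field_simps)
    then show ?thesis by (simp add: powr_divide powr_powr)
  qed
  moreover have "c powr (1 / \<alpha>) * c powr (- (1 / \<alpha>)) = 1"
    using c by (simp flip: powr_add)
  moreover have "(q powr \<alpha> * c * H powr (\<alpha> - 1)) powr (1 / \<alpha>)
        * (c powr (1 / (1 - \<alpha>)) / H) powr ((\<alpha> - 1) / \<alpha>)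
      \<le> 1 / \<alpha> * (q powr \<alpha> * c * H powr (\<alpha> - 1)) + (\<alpha> - 1) / \<alpha> * (c powr (1 / (1 - \<alpha>)) / H)"
    using \<alpha> c H by (intro Youngs_inequality_nonneg) (auto simp: field_simps)
  ultimately show ?thesis
    using H by (simp add: field_simps)
qed

lemma sum_powr_mult_ge_Hoelder:
  fixes Q c :: "'a \<Rightarrow> real"
  assumes A: "finite A" and \<alpha>: "1 < \<alpha>"
    and Q: "\<And>y. y \<in> A \<Longrightarrow> 0 \<le> Q y" "(\<Sum>y\<in>A. Q y) = 1"
    and c: "\<And>y. y \<in> A \<Longrightarrow> 0 < c y"
  shows "(\<Sum>y\<in>A. c y powr (1 / (1 - \<alpha>))) powr (1 - \<alpha>) \<le> (\<Sum>y\<in>A. Q y powr \<alpha> * c y)"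
proof -
  define H where "H = (\<Sum>y\<in>A. c y powr (1 / (1 - \<alpha>)))"
  define S where "S = (\<Sum>y\<in>A. Q y powr \<alpha> * c y)"
  have "A \<noteq> {}" using Q(2) by auto
  moreover have "0 < c y powr (1 / (1 - \<alpha>))" if "y \<in> A" for y
    using c[OF that] by simp
  ultimately have H: "0 < H"
    unfolding H_def using A by (intro sum_pos) auto
  have "1 = (\<Sum>y\<in>A. Q y)" using Q(2) ..
  also have "\<dots> \<le> (\<Sum>y\<in>A. 1 / \<alpha> * (Q y powr \<alpha> * c y * H powr (\<alpha> - 1))
      + (\<alpha> - 1) / \<alpha> * (c y powr (1 / (1 - \<alpha>)) / H))"
    using \<alpha> Q(1) c H by (intro sum_mono Youngs_inequality_powr_lower_bound) auto
  also have "\<dots> = 1 / \<alpha> * H powr (\<alpha> - 1) * (\<Sum>y\<in>A. Q y powr \<alpha> * c y)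
      + (\<alpha> - 1) / \<alpha> * ((\<Sum>y\<in>A. c y powr (1 / (1 - \<alpha>))) / H)"
    by (simp add: sum.distrib sum_distrib_left sum_divide_distrib algebra_simps)
  also have "\<dots> = 1 / \<alpha> * H powr (\<alpha> - 1) * S + (\<alpha> - 1) / \<alpha>"
    using H by (simp add: S_def H_def[symmetric])
  finally have "1 \<le> H powr (\<alpha> - 1) * S"
    using \<alpha> H by (simp add: field_simps)
  then have "1 / H powr (\<alpha> - 1) \<le> S"
    using H by (simp add: field_simps)
  then show ?thesis
    using H by (simp add: S_def H_def powr_minus_divide [of _ "\<alpha> - 1", symmetric])
qed

text \<open>For \<alpha> > 1 the exponent 1/(1-\<alpha>) is negative, and the convention 0 powr r = 0 would
  make the right-hand side too small; hence the positivity hypothesis.\<close>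

lemma sum_powr_mult_Hoelder:
  fixes Q c :: "'a \<Rightarrow> real"
  assumes A: "finite A" and \<alpha>: "0 < \<alpha>" "\<alpha> \<noteq> 1"
    and Q: "\<And>y. y \<in> A \<Longrightarrow> 0 \<le> Q y" "(\<Sum>y\<in>A. Q y) = 1"
    and c: "\<And>y. y \<in> A \<Longrightarrow> 0 \<le> c y" "\<And>y. 1 < \<alpha> \<Longrightarrow> y \<in> A \<Longrightarrow> 0 < c y"
  shows "(\<Sum>y\<in>A. Q y powr \<alpha> * c y) powr (1 / (1 - \<alpha>)) \<le> (\<Sum>y\<in>A. c y powr (1 / (1 - \<alpha>)))"
proof -
  define H where "H = (\<Sum>y\<in>A. c y powr (1 / (1 - \<alpha>)))"
  have H_powr: "(H powr (1 - \<alpha>)) powr (1 / (1 - \<alpha>)) = H"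
    using \<alpha> by (simp add: H_def powr_powr sum_nonneg)
  consider "\<alpha> < 1" | "1 < \<alpha>" using \<alpha> by linarith
  then show ?thesis
  proof cases
    case 1
    have "(\<Sum>y\<in>A. Q y powr \<alpha> * c y) \<le> H powr (1 - \<alpha>)"
      unfolding H_def using A \<alpha> 1 Q c by (intro sum_powr_mult_le_Hoelder) auto
    then have "(\<Sum>y\<in>A. Q y powr \<alpha> * c y) powr (1 / (1 - \<alpha>)) \<le> (H powr (1 - \<alpha>)) powr (1 / (1 - \<alpha>))"
      using 1 c by (intro powr_mono2) (auto intro!: sum_nonneg)
    then show ?thesis using H_powr by (simp add: H_def)
  next
    case 2
    have "A \<noteq> {}" using Q(2) by auto
    moreover have "0 < c y powr (1 / (1 - \<alpha>))" if "y \<in> A" for y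
      using c(2)[OF 2 that] by simp
    ultimately have "0 < H"
      unfolding H_def using A by (intro sum_pos) auto
    moreover have "H powr (1 - \<alpha>) \<le> (\<Sum>y\<in>A. Q y powr \<alpha> * c y)"
      unfolding H_def using A 2 Q c by (intro sum_powr_mult_ge_Hoelder) auto
    ultimately have "(\<Sum>y\<in>A. Q y powr \<alpha> * c y) powr (1 / (1 - \<alpha>)) \<le> (H powr (1 - \<alpha>)) powr (1 / (1 - \<alpha>))"
      using 2 by (intro powr_mono2') auto
    then show ?thesis using H_powr by (simp add: H_def)
  qed
qed

lemma sum_powr_mult_Hoelder_eq:
  fixes Q c :: "'a \<Rightarrow> real"
  assumes \<alpha>: "\<alpha> \<noteq> 1" and c: "\<And>y. y \<in> A \<Longrightarrow> 0 \<le> c y"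
    and H: "H = (\<Sum>y\<in>A. c y powr (1 / (1 - \<alpha>)))" "0 < H"
    and Q: "\<And>y. y \<in> A \<Longrightarrow> Q y = c y powr (1 / (1 - \<alpha>)) / H"
  shows "(\<Sum>y\<in>A. Q y powr \<alpha> * c y) powr (1 / (1 - \<alpha>)) = H"
proof -
  have "Q y powr \<alpha> * c y = c y powr (1 / (1 - \<alpha>)) / H powr \<alpha>" if y: "y \<in> A" for y
  proof -
    have "c y powr (1 / (1 - \<alpha>) * \<alpha>) * c y = c y powr (1 / (1 - \<alpha>))"
    proof (cases "c y = 0")
      case False
      have "1 / (1 - \<alpha>) * \<alpha> + 1 = 1 / (1 - \<alpha>)"
        using \<alpha> by (simp add: field_simps)
      then have "c y powr (1 / (1 - \<alpha>) * \<alpha>) * c y powr 1 = c y powr (1 / (1 - \<alpha>))"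
        by (metis powr_add)
      then show ?thesis
        using False c[OF y] by simp
    qed simp
    then show ?thesis
      using c[OF y] H(2) by (simp add: Q[OF y] powr_divide powr_powr)
  qed
  then have "(\<Sum>y\<in>A. Q y powr \<alpha> * c y) = H / H powr \<alpha>"
    by (simp add: H(1) sum_divide_distrib)
  also have "\<dots> = H powr (1 - \<alpha>)"
    using H(2) by (simp add: powr_diff)
  finally show ?thesis
    using \<alpha> H(2) by (simp add: powr_powr)
qed

section \<open>Input distributions and channels\<close>

lemma mult_pos_iff_nonneg:
  fixes a b :: real
  shows "0 \<le> a \<Longrightarrow> 0 \<le> b \<Longrightarrow> 0 < a * b \<longleftrightarrow> 0 < a \<and> 0 < b"
  by (auto simp: zero_less_mult_iff)

lemma sum_UNIV_pair:
  "(\<Sum>z\<in>UNIV. f z) = (\<Sum>a\<in>UNIV. \<Sum>b\<in>UNIV. f (a, b))"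
  by (simp add: sum.cartesian_product flip: UNIV_Times_UNIV)

lemma is_dist_nonneg: "is_dist P \<Longrightarrow> 0 \<le> P x"
  by (simp add: is_dist_def)

lemma is_channel_nonneg: "is_channel W \<Longrightarrow> 0 \<le> W x y"
  by (simp add: is_channel_def is_dist_def)

lemma is_dist_ex_pos: "is_dist P \<Longrightarrow> \<exists>x. 0 < P x"
proof (rule ccontr)
  assume "is_dist P" "\<nexists>x. 0 < P x"
  then have "\<And>x. P x = 0" by (simp add: is_dist_def order.antisym leI)
  with \<open>is_dist P\<close> show False by (simp add: is_dist_def)
qed

lemma ex_is_dist: "\<exists>P::'a::finite \<Rightarrow> real. is_dist P"
  by (rule exI[of _ "\<lambda>_. 1 / real CARD('a)"]) (simp add: is_dist_def)

lemma is_dist_product: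
  "is_dist P1 \<Longrightarrow> is_dist P2 \<Longrightarrow> is_dist (\<lambda>(x1, x2). P1 x1 * P2 x2)"
  unfolding is_dist_def sum_UNIV_pair
  by (simp add: sum_distrib_left[symmetric] sum_distrib_right[symmetric])

lemma is_channel_prod_channel:
  "is_channel W1 \<Longrightarrow> is_channel W2 \<Longrightarrow> is_channel (prod_channel W1 W2)"
  unfolding is_channel_def prod_channel_def
  by (auto simp: case_prod_unfold intro!: is_dist_product[unfolded case_prod_unfold])

definition fst_marginal :: "('a::finite \<times> 'b::finite \<Rightarrow> real) \<Rightarrow> 'a \<Rightarrow> real" where
  "fst_marginal P x1 = (\<Sum>x2\<in>UNIV. P (x1, x2))"

lemma is_dist_fst_marginal: "is_dist P \<Longrightarrow> is_dist (fst_marginal P)"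
  unfolding is_dist_def fst_marginal_def sum_UNIV_pair[of P] by (auto intro: sum_nonneg)

lemma fst_marginal_ge: "is_dist P \<Longrightarrow> P (x1, x2) \<le> fst_marginal P x1"
  unfolding fst_marginal_def by (rule member_le_sum) (auto simp: is_dist_nonneg)

section \<open>The minimisation over output distributions\<close>

definition mixture_powr :: "real \<Rightarrow> ('x::finite \<Rightarrow> 'y \<Rightarrow> real) \<Rightarrow> ('x \<Rightarrow> real) \<Rightarrow> 'y \<Rightarrow> real" where
  "mixture_powr \<alpha> W P y = (\<Sum>x\<in>UNIV. P x * W x y powr (1 - \<alpha>))"

text \<open>For \<alpha> > 1 the divergence D_\<alpha>(P \<times> Q || P_XY) is infinite unless Q is supported on
  these outputs.\<close>

definition admissible_outputs :: "real \<Rightarrow> ('x::finite \<Rightarrow> 'y \<Rightarrow> real) \<Rightarrow> ('x \<Rightarrow> real) \<Rightarrow> 'y set" where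
  "admissible_outputs \<alpha> W P = {y. \<alpha> < 1 \<or> (\<forall>x. 0 < P x \<longrightarrow> 0 < W x y)}"

definition hoelder_sum :: "real \<Rightarrow> ('x::finite \<Rightarrow> 'y::finite \<Rightarrow> real) \<Rightarrow> ('x \<Rightarrow> real) \<Rightarrow> real" where
  "hoelder_sum \<alpha> W P =
     (\<Sum>y\<in>admissible_outputs \<alpha> W P. mixture_powr \<alpha> W P y powr (1 / (1 - \<alpha>)))"

definition neg_ln :: "real \<Rightarrow> ereal" where
  "neg_ln t = (if t = 0 then \<infinity> else ereal (- ln t))"

lemma mixture_powr_nonneg: "is_dist P \<Longrightarrow> 0 \<le> mixture_powr \<alpha> W P y"
  unfolding mixture_powr_def by (simp add: is_dist_nonneg sum_nonneg)

lemma mixture_powr_pos: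
  assumes "is_dist P" "\<And>x. 0 < P x \<Longrightarrow> 0 < W x y"
  shows "0 < mixture_powr \<alpha> W P y"
proof -
  obtain x where x: "0 < P x" using is_dist_ex_pos[OF assms(1)] ..
  then have "0 < P x * W x y powr (1 - \<alpha>)" using assms(2)[OF x] by simp
  also have "\<dots> \<le> mixture_powr \<alpha> W P y"
    unfolding mixture_powr_def using assms(1) by (intro member_le_sum) (auto simp: is_dist_nonneg)
  finally show ?thesis .
qed

lemma hoelder_sum_nonneg: "0 \<le> hoelder_sum \<alpha> W P"
  unfolding hoelder_sum_def by (simp add: sum_nonneg)

lemma neg_ln_not_MInfty: "neg_ln t \<noteq> -\<infinity>"
  by (simp add: neg_ln_def)

lemma neg_ln_antimono: "0 \<le> s \<Longrightarrow> s \<le> t \<Longrightarrow> neg_ln t \<le> neg_ln s"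
  by (auto simp: neg_ln_def)

lemma neg_ln_mult: "0 \<le> a \<Longrightarrow> 0 \<le> b \<Longrightarrow> neg_ln (a * b) = neg_ln a + neg_ln b"
  by (auto simp: neg_ln_def ln_mult)

lemma neg_ln_le_ereal_iff: "0 \<le> t \<Longrightarrow> neg_ln t \<le> ereal u \<longleftrightarrow> exp (- u) \<le> t"
proof -
  assume t: "0 \<le> t"
  show ?thesis
  proof (cases "t = 0")
    case False
    then have "0 < t" using t by simp
    then show ?thesis using ln_ge_iff[of t "- u"] by (auto simp: neg_ln_def)
  qed (simp add: neg_ln_def)
qed

lemma ln_div_eq_neg_ln_powr:
  fixes s \<alpha> :: real
  assumes "0 < s" "\<alpha> \<noteq> 1"
  shows "ln s / (\<alpha> - 1) = - ln (s powr (1 / (1 - \<alpha>)))"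
  using assms by (simp add: ln_powr field_simps)

lemma sum_powr_product_joint:
  fixes P :: "'x::finite \<Rightarrow> real" and Q :: "'y::finite \<Rightarrow> real"
  assumes P: "\<And>x. 0 \<le> P x" and Q: "\<And>y. 0 \<le> Q y"
  shows "(\<Sum>z\<in>{z. 0 < (\<lambda>(x, y). P x * Q y) z}.
      (\<lambda>(x, y). P x * Q y) z powr \<alpha> * (\<lambda>(x, y). P x * W x y) z powr (1 - \<alpha>))
    = (\<Sum>y\<in>UNIV. Q y powr \<alpha> * mixture_powr \<alpha> W P y)"
proof -
  define PQ where "PQ = (\<lambda>(x, y). P x * Q y)"
  define PW where "PW = (\<lambda>(x, y). P x * W x y)"
  have "(\<Sum>z\<in>{z. 0 < PQ z}. PQ z powr \<alpha> * PW z powr (1 - \<alpha>))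
      = (\<Sum>z\<in>UNIV. PQ z powr \<alpha> * PW z powr (1 - \<alpha>))"
  proof (intro sum.mono_neutral_left ballI)
    fix z assume "z \<in> UNIV - {z. 0 < PQ z}"
    moreover have "0 \<le> PQ z"
      using P Q by (simp add: PQ_def split_def)
    ultimately show "PQ z powr \<alpha> * PW z powr (1 - \<alpha>) = 0" by simp
  qed auto
  also have "\<dots> = (\<Sum>x\<in>UNIV. \<Sum>y\<in>UNIV. Q y powr \<alpha> * (P x * W x y powr (1 - \<alpha>)))"
  proof -
    have "P x powr \<alpha> * P x powr (1 - \<alpha>) = P x" for x
      using P by (simp flip: powr_add)
    then have "(P x * Q y) powr \<alpha> * (P x * W x y) powr (1 - \<alpha>)
        = Q y powr \<alpha> * (P x * W x y powr (1 - \<alpha>))" for x y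
      using P Q by (simp add: powr_mult ac_simps)
    then show ?thesis
      unfolding sum_UNIV_pair[of "\<lambda>z. PQ z powr \<alpha> * PW z powr (1 - \<alpha>)"]
      by (simp add: PQ_def PW_def)
  qed
  also have "\<dots> = (\<Sum>y\<in>UNIV. Q y powr \<alpha> * mixture_powr \<alpha> W P y)"
    by (subst sum.swap) (simp add: mixture_powr_def sum_distrib_left)
  finally show ?thesis
    by (simp add: PQ_def PW_def)
qed

lemma renyi_div_product_joint:
  fixes P :: "'x::finite \<Rightarrow> real" and Q :: "'y::finite \<Rightarrow> real"
  assumes \<alpha>: "\<alpha> \<noteq> 1" and P: "is_dist P" and Q: "is_dist Q" and W: "is_channel W"
  shows "renyi_div \<alpha> (\<lambda>(x, y). P x * Q y) (\<lambda>(x, y). P x * W x y) =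
    (if {y. 0 < Q y} \<subseteq> admissible_outputs \<alpha> W P
     then neg_ln ((\<Sum>y\<in>UNIV. Q y powr \<alpha> * mixture_powr \<alpha> W P y) powr (1 / (1 - \<alpha>)))
     else \<infinity>)"
proof -
  note nonneg = is_dist_nonneg[OF P] is_dist_nonneg[OF Q] is_channel_nonneg[OF W]
  define s where "s = (\<Sum>y\<in>UNIV. Q y powr \<alpha> * mixture_powr \<alpha> W P y)"
  have support: "(\<forall>z. 0 < (\<lambda>(x, y). P x * Q y) z \<longrightarrow> 0 < (\<lambda>(x, y). P x * W x y) z)
      \<longleftrightarrow> {y. 0 < Q y} \<subseteq> admissible_outputs \<alpha> W P"
    if "1 < \<alpha>"
    using that nonneg by (auto simp: admissible_outputs_def mult_pos_iff_nonneg)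
  have "0 \<le> s"
    unfolding s_def using P by (simp add: sum_nonneg mixture_powr_nonneg)
  then have "(if s = 0 then \<infinity> else ereal (ln s / (\<alpha> - 1))) = neg_ln (s powr (1 / (1 - \<alpha>)))"
    using \<alpha> by (simp add: neg_ln_def ln_div_eq_neg_ln_powr)
  moreover have "\<alpha> < 1 \<Longrightarrow> {y. 0 < Q y} \<subseteq> admissible_outputs \<alpha> W P"
    by (simp add: admissible_outputs_def)
  ultimately show ?thesis
    unfolding renyi_div_def Let_def sum_powr_product_joint[OF nonneg(1,2)] s_def[symmetric]
    using support \<alpha> by auto
qed

lemma renyi_div_product_joint_admissible:
  fixes P :: "'x::finite \<Rightarrow> real" and Q :: "'y::finite \<Rightarrow> real"
  assumes \<alpha>: "\<alpha> \<noteq> 1" and P: "is_dist P" and Q: "is_dist Q" and W: "is_channel W"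
    and supp: "\<And>y. y \<notin> admissible_outputs \<alpha> W P \<Longrightarrow> Q y = 0"
  shows "renyi_div \<alpha> (\<lambda>(x, y). P x * Q y) (\<lambda>(x, y). P x * W x y) = neg_ln
    ((\<Sum>y\<in>admissible_outputs \<alpha> W P. Q y powr \<alpha> * mixture_powr \<alpha> W P y) powr (1 / (1 - \<alpha>)))"
proof -
  have "{y. 0 < Q y} \<subseteq> admissible_outputs \<alpha> W P"
    using supp by force
  moreover have "(\<Sum>y\<in>UNIV. Q y powr \<alpha> * mixture_powr \<alpha> W P y)
      = (\<Sum>y\<in>admissible_outputs \<alpha> W P. Q y powr \<alpha> * mixture_powr \<alpha> W P y)"
    using supp by (intro sum.mono_neutral_right) auto
  ultimately show ?thesis
    by (simp add: renyi_div_product_joint[OF \<alpha> P Q W])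
qed

lemma neg_ln_hoelder_sum_le_renyi_div:
  fixes P :: "'x::finite \<Rightarrow> real" and Q :: "'y::finite \<Rightarrow> real"
  assumes \<alpha>: "0 < \<alpha>" "\<alpha> \<noteq> 1" and P: "is_dist P" and Q: "is_dist Q" and W: "is_channel W"
  shows "neg_ln (hoelder_sum \<alpha> W P) \<le> renyi_div \<alpha> (\<lambda>(x, y). P x * Q y) (\<lambda>(x, y). P x * W x y)"
proof (cases "{y. 0 < Q y} \<subseteq> admissible_outputs \<alpha> W P")
  case True
  define G where "G = admissible_outputs \<alpha> W P"
  have supp: "\<And>y. y \<notin> G \<Longrightarrow> Q y = 0"
    using True is_dist_nonneg[OF Q] by (force simp: G_def less_le)
  have "(\<Sum>y\<in>G. Q y) = 1"
    using Q supp by (simp add: is_dist_def sum.mono_neutral_left[of UNIV G])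
  moreover have "0 < mixture_powr \<alpha> W P y" if "1 < \<alpha>" "y \<in> G" for y
    using that P unfolding G_def admissible_outputs_def by (intro mixture_powr_pos) auto
  ultimately have "(\<Sum>y\<in>G. Q y powr \<alpha> * mixture_powr \<alpha> W P y) powr (1 / (1 - \<alpha>))
      \<le> hoelder_sum \<alpha> W P"
    unfolding hoelder_sum_def G_def[symmetric] using \<alpha> is_dist_nonneg[OF Q] mixture_powr_nonneg[OF P]
    by (intro sum_powr_mult_Hoelder) auto
  then show ?thesis
    using supp by (simp add: G_def renyi_div_product_joint_admissible[OF \<alpha>(2) P Q W] neg_ln_antimono)
next
  case False
  then show ?thesis
    by (simp add: renyi_div_product_joint[OF \<alpha>(2) P Q W])
qed

lemma renyi_div_product_joint_attains_hoelder_sum: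
  fixes P :: "'x::finite \<Rightarrow> real" and W :: "'x \<Rightarrow> 'y::finite \<Rightarrow> real"
  assumes \<alpha>: "\<alpha> \<noteq> 1" and P: "is_dist P" and W: "is_channel W" and pos: "0 < hoelder_sum \<alpha> W P"
  obtains Q where "is_dist Q"
    "renyi_div \<alpha> (\<lambda>(x, y). P x * Q y) (\<lambda>(x, y). P x * W x y) = neg_ln (hoelder_sum \<alpha> W P)"
proof -
  define G where "G = admissible_outputs \<alpha> W P"
  define c where "c = mixture_powr \<alpha> W P"
  define H where "H = hoelder_sum \<alpha> W P"
  have H: "0 < H" using pos by (simp add: H_def)
  have H_def': "H = (\<Sum>y\<in>G. c y powr (1 / (1 - \<alpha>)))"
    by (simp add: H_def G_def c_def hoelder_sum_def)
  define Q where "Q y = (if y \<in> G then c y powr (1 / (1 - \<alpha>)) / H else 0)" for y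
  have "(\<Sum>y\<in>UNIV. Q y) = 1"
    using H by (simp add: Q_def H_def' sum.If_cases flip: sum_divide_distrib)
  then have Q_dist: "is_dist Q"
    using H by (simp add: is_dist_def Q_def)
  have "(\<Sum>y\<in>G. Q y powr \<alpha> * c y) powr (1 / (1 - \<alpha>)) = H"
    using \<alpha> mixture_powr_nonneg[OF P] H
    by (intro sum_powr_mult_Hoelder_eq[OF _ _ H_def']) (auto simp: Q_def c_def)
  moreover have "Q y = 0" if "y \<notin> admissible_outputs \<alpha> W P" for y
    using that by (simp add: Q_def G_def)
  ultimately have "renyi_div \<alpha> (\<lambda>(x, y). P x * Q y) (\<lambda>(x, y). P x * W x y) = neg_ln H"
    by (simp add: renyi_div_product_joint_admissible[OF \<alpha> P Q_dist W] G_def c_def)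
  with Q_dist show ?thesis
    using that by (simp add: H_def)
qed

lemma INF_renyi_div_product_joint:
  fixes P :: "'x::finite \<Rightarrow> real" and W :: "'x \<Rightarrow> 'y::finite \<Rightarrow> real"
  assumes \<alpha>: "0 < \<alpha>" "\<alpha> \<noteq> 1" and P: "is_dist P" and W: "is_channel W"
  shows "(INF Q\<in>{Q. is_dist Q}. renyi_div \<alpha> (\<lambda>(x, y). P x * Q y) (\<lambda>(x, y). P x * W x y))
    = neg_ln (hoelder_sum \<alpha> W P)"
proof (rule order.antisym)
  show "(INF Q\<in>{Q. is_dist Q}. renyi_div \<alpha> (\<lambda>(x, y). P x * Q y) (\<lambda>(x, y). P x * W x y))
      \<le> neg_ln (hoelder_sum \<alpha> W P)"
  proof (cases "hoelder_sum \<alpha> W P = 0")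
    case False
    then have "0 < hoelder_sum \<alpha> W P"
      using hoelder_sum_nonneg by (simp add: less_le)
    then obtain Q where "is_dist Q"
      "renyi_div \<alpha> (\<lambda>(x, y). P x * Q y) (\<lambda>(x, y). P x * W x y) = neg_ln (hoelder_sum \<alpha> W P)"
      using renyi_div_product_joint_attains_hoelder_sum[OF \<alpha>(2) P W] by blast
    then show ?thesis
      by (intro INF_lower2) auto
  qed (simp add: neg_ln_def)
  show "neg_ln (hoelder_sum \<alpha> W P)
      \<le> (INF Q\<in>{Q. is_dist Q}. renyi_div \<alpha> (\<lambda>(x, y). P x * Q y) (\<lambda>(x, y). P x * W x y))"
    using neg_ln_hoelder_sum_le_renyi_div[OF \<alpha> P _ W] by (intro INF_greatest) auto
qed

lemma U_alpha_eq_SUP_neg_ln_hoelder_sum: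
  fixes W :: "'x::finite \<Rightarrow> 'y::finite \<Rightarrow> real"
  assumes "0 < \<alpha>" "\<alpha> \<noteq> 1" "is_channel W"
  shows "U_alpha \<alpha> W = (SUP P\<in>{P. is_dist P}. neg_ln (hoelder_sum \<alpha> W P))"
  unfolding U_alpha_def using assms by (intro SUP_cong) (auto simp: INF_renyi_div_product_joint)

lemma neg_ln_hoelder_sum_le_U_alpha:
  assumes "0 < \<alpha>" "\<alpha> \<noteq> 1" "is_channel W" "is_dist P"
  shows "neg_ln (hoelder_sum \<alpha> W P) \<le> U_alpha \<alpha> W"
  unfolding U_alpha_eq_SUP_neg_ln_hoelder_sum[OF assms(1-3)]
  using assms(4) by (intro SUP_upper) auto

lemma U_alpha_not_MInfty:
  fixes W :: "'x::finite \<Rightarrow> 'y::finite \<Rightarrow> real"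
  assumes "0 < \<alpha>" "\<alpha> \<noteq> 1" "is_channel W"
  shows "U_alpha \<alpha> W \<noteq> -\<infinity>"
proof -
  obtain P :: "'x \<Rightarrow> real" where "is_dist P" using ex_is_dist by blast
  then have "neg_ln (hoelder_sum \<alpha> W P) \<le> U_alpha \<alpha> W"
    using assms by (intro neg_ln_hoelder_sum_le_U_alpha)
  then show ?thesis
    using neg_ln_not_MInfty by (metis ereal_infty_less_eq(2))
qed

lemma hoelder_sum_ge_exp_neg_U_alpha:
  assumes "0 < \<alpha>" "\<alpha> \<noteq> 1" "is_channel W" "U_alpha \<alpha> W = ereal u" "is_dist P"
  shows "exp (- u) \<le> hoelder_sum \<alpha> W P"
  using neg_ln_hoelder_sum_le_U_alpha[OF assms(1-3,5)] assms(4)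
  by (simp add: neg_ln_le_ereal_iff hoelder_sum_nonneg)

section \<open>Product channels\<close>

lemma mixture_powr_prod_channel:
  "mixture_powr \<alpha> (prod_channel W1 W2) (\<lambda>(x1, x2). P1 x1 * P2 x2) (y1, y2)
    = mixture_powr \<alpha> W1 P1 y1 * mixture_powr \<alpha> W2 P2 y2"
  unfolding mixture_powr_def prod_channel_def sum_UNIV_pair
  by (simp add: powr_mult sum_product algebra_simps)

lemma admissible_outputs_prod_channel:
  assumes "is_dist P1" "is_dist P2" "is_channel W1" "is_channel W2"
  shows "admissible_outputs \<alpha> (prod_channel W1 W2) (\<lambda>(x1, x2). P1 x1 * P2 x2)
    = admissible_outputs \<alpha> W1 P1 \<times> admissible_outputs \<alpha> W2 P2"
proof -
  obtain a1 a2 where "0 < P1 a1" "0 < P2 a2"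
    using is_dist_ex_pos[OF assms(1)] is_dist_ex_pos[OF assms(2)] by blast
  then show ?thesis
    using assms unfolding admissible_outputs_def prod_channel_def
    by (auto simp: mult_pos_iff_nonneg is_dist_nonneg is_channel_nonneg)
qed

lemma hoelder_sum_prod_channel:
  assumes "is_dist P1" "is_dist P2" "is_channel W1" "is_channel W2"
  shows "hoelder_sum \<alpha> (prod_channel W1 W2) (\<lambda>(x1, x2). P1 x1 * P2 x2)
    = hoelder_sum \<alpha> W1 P1 * hoelder_sum \<alpha> W2 P2"
  unfolding hoelder_sum_def admissible_outputs_prod_channel[OF assms]
  by (simp add: sum.cartesian_product' mixture_powr_prod_channel powr_mult sum_product)

definition tilted_snd ::
  "real \<Rightarrow> ('x1::finite \<Rightarrow> 'y1 \<Rightarrow> real) \<Rightarrow> ('x1 \<times> 'x2::finite \<Rightarrow> real) \<Rightarrow> 'y1 \<Rightarrow> 'x2 \<Rightarrow> real" where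
  "tilted_snd \<alpha> W1 P y1 x2 =
     (\<Sum>x1\<in>UNIV. P (x1, x2) * W1 x1 y1 powr (1 - \<alpha>)) / mixture_powr \<alpha> W1 (fst_marginal P) y1"

lemma mixture_powr_prod_channel_tilted:
  fixes P :: "'x1::finite \<times> 'x2::finite \<Rightarrow> real"
  assumes "mixture_powr \<alpha> W1 (fst_marginal P) y1 \<noteq> 0"
  shows "mixture_powr \<alpha> (prod_channel W1 W2) P (y1, y2)
    = mixture_powr \<alpha> W1 (fst_marginal P) y1 * mixture_powr \<alpha> W2 (tilted_snd \<alpha> W1 P y1) y2"
proof -
  have "mixture_powr \<alpha> (prod_channel W1 W2) P (y1, y2)
      = (\<Sum>x2\<in>UNIV. (\<Sum>x1\<in>UNIV. P (x1, x2) * W1 x1 y1 powr (1 - \<alpha>)) * W2 x2 y2 powr (1 - \<alpha>))"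
    unfolding mixture_powr_def prod_channel_def sum_UNIV_pair[of "\<lambda>x. P x * _ x"]
    by (subst sum.swap) (simp add: powr_mult sum_distrib_left sum_distrib_right ac_simps)
  then show ?thesis
    using assms by (simp add: mixture_powr_def tilted_snd_def sum_distrib_left)
qed

lemma is_dist_tilted_snd:
  assumes "is_dist P" "0 < mixture_powr \<alpha> W1 (fst_marginal P) y1"
  shows "is_dist (tilted_snd \<alpha> W1 P y1)"
proof -
  have "(\<Sum>x2\<in>UNIV. \<Sum>x1\<in>UNIV. P (x1, x2) * W1 x1 y1 powr (1 - \<alpha>))
      = mixture_powr \<alpha> W1 (fst_marginal P) y1"
    unfolding mixture_powr_def fst_marginal_def
    by (subst sum.swap) (simp add: sum_distrib_right)
  then show ?thesis
    using assms unfolding is_dist_def tilted_snd_def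
    by (auto simp: is_dist_nonneg sum_nonneg simp flip: sum_divide_distrib)
qed

lemma tilted_snd_pos_iff:
  assumes "is_dist P" "0 < mixture_powr \<alpha> W1 (fst_marginal P) y1"
    and "\<And>x1 x2. 0 < P (x1, x2) \<Longrightarrow> 0 < W1 x1 y1"
  shows "0 < tilted_snd \<alpha> W1 P y1 x2 \<longleftrightarrow> (\<exists>x1. 0 < P (x1, x2))"
proof -
  have "0 < (\<Sum>x1\<in>UNIV. P (x1, x2) * W1 x1 y1 powr (1 - \<alpha>)) \<longleftrightarrow> (\<exists>x1. 0 < P (x1, x2))"
    using assms(1,3) is_dist_nonneg[OF assms(1)]
    by (auto simp: less_le sum_nonneg sum_nonneg_eq_0_iff)
  then show ?thesis
    using assms(2) by (simp add: tilted_snd_def zero_less_divide_iff)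
qed

lemma admissible_outputs_prod_channel_slice:
  fixes P :: "'x1::finite \<times> 'x2::finite \<Rightarrow> real"
  assumes P: "is_dist P" and W1: "is_channel W1" and W2: "is_channel W2"
    and y1: "y1 \<in> admissible_outputs \<alpha> W1 (fst_marginal P)"
    and C: "0 < mixture_powr \<alpha> W1 (fst_marginal P) y1"
  shows "{y2. (y1, y2) \<in> admissible_outputs \<alpha> (prod_channel W1 W2) P}
    = admissible_outputs \<alpha> W2 (tilted_snd \<alpha> W1 P y1)"
proof (cases "\<alpha> < 1")
  case True
  then show ?thesis by (simp add: admissible_outputs_def)
next
  case False
  have W1_pos: "0 < W1 x1 y1" if "0 < P (x1, x2)" for x1 x2
    using y1 False fst_marginal_ge[OF P, of x1 x2] that by (auto simp: admissible_outputs_def)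
  show ?thesis
    using False W1_pos tilted_snd_pos_iff[OF P C W1_pos]
    unfolding admissible_outputs_def prod_channel_def
    by (auto simp: mult_pos_iff_nonneg is_channel_nonneg W1 W2)
qed

lemma hoelder_sum_prod_channel_slice:
  fixes P :: "'x1::finite \<times> 'x2::finite \<Rightarrow> real"
    and W1 :: "'x1 \<Rightarrow> 'y1::finite \<Rightarrow> real" and W2 :: "'x2 \<Rightarrow> 'y2::finite \<Rightarrow> real"
  assumes P: "is_dist P" and W1: "is_channel W1" and W2: "is_channel W2"
    and y1: "y1 \<in> admissible_outputs \<alpha> W1 (fst_marginal P)"
    and C: "0 < mixture_powr \<alpha> W1 (fst_marginal P) y1"
  shows "(\<Sum>y2\<in>{y2. (y1, y2) \<in> admissible_outputs \<alpha> (prod_channel W1 W2) P}.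
      mixture_powr \<alpha> (prod_channel W1 W2) P (y1, y2) powr (1 / (1 - \<alpha>)))
    = mixture_powr \<alpha> W1 (fst_marginal P) y1 powr (1 / (1 - \<alpha>))
      * hoelder_sum \<alpha> W2 (tilted_snd \<alpha> W1 P y1)"
  using C
  by (simp add: hoelder_sum_def powr_mult sum_distrib_left mixture_powr_nonneg
      admissible_outputs_prod_channel_slice[OF P W1 W2 y1 C] mixture_powr_prod_channel_tilted
      is_dist_tilted_snd[OF P C] is_dist_fst_marginal[OF P])

lemma hoelder_sum_prod_channel_ge:
  fixes P :: "'x1::finite \<times> 'x2::finite \<Rightarrow> real"
    and W1 :: "'x1 \<Rightarrow> 'y1::finite \<Rightarrow> real" and W2 :: "'x2 \<Rightarrow> 'y2::finite \<Rightarrow> real"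
  assumes P: "is_dist P" and W1: "is_channel W1" and W2: "is_channel W2"
    and L: "0 \<le> L" "\<And>Q. is_dist Q \<Longrightarrow> L \<le> hoelder_sum \<alpha> W2 Q"
  shows "hoelder_sum \<alpha> W1 (fst_marginal P) * L \<le> hoelder_sum \<alpha> (prod_channel W1 W2) P"
proof -
  define r where "r = 1 / (1 - \<alpha>)"
  define G1 where "G1 = admissible_outputs \<alpha> W1 (fst_marginal P)"
  define G where "G = admissible_outputs \<alpha> (prod_channel W1 W2) P"
  define C where "C = mixture_powr \<alpha> W1 (fst_marginal P)"
  define c where "c = mixture_powr \<alpha> (prod_channel W1 W2) P"
  have slice_ge: "C y1 powr r * L \<le> (\<Sum>y2\<in>{y2. (y1, y2) \<in> G}. c (y1, y2) powr r)"
    if y1: "y1 \<in> G1" for y1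
  proof (cases "C y1 = 0")
    case False
    then have C_pos: "0 < mixture_powr \<alpha> W1 (fst_marginal P) y1"
      using mixture_powr_nonneg[OF is_dist_fst_marginal[OF P]] by (simp add: C_def less_le)
    then have "L \<le> hoelder_sum \<alpha> W2 (tilted_snd \<alpha> W1 P y1)"
      by (intro L(2) is_dist_tilted_snd[OF P])
    then show ?thesis
      using hoelder_sum_prod_channel_slice[OF P W1 W2 y1[unfolded G1_def] C_pos]
      by (simp add: G_def c_def C_def r_def mult_left_mono)
  qed (simp add: sum_nonneg)
  have G_Sigma: "G = (SIGMA y1:UNIV. {y2. (y1, y2) \<in> G})" by auto
  have "hoelder_sum \<alpha> W1 (fst_marginal P) * L = (\<Sum>y1\<in>G1. C y1 powr r * L)"
    by (simp add: hoelder_sum_def G1_def C_def r_def sum_distrib_right)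
  also have "\<dots> \<le> (\<Sum>y1\<in>G1. \<Sum>y2\<in>{y2. (y1, y2) \<in> G}. c (y1, y2) powr r)"
    by (rule sum_mono) (rule slice_ge)
  also have "\<dots> \<le> (\<Sum>y1\<in>UNIV. \<Sum>y2\<in>{y2. (y1, y2) \<in> G}. c (y1, y2) powr r)"
    by (rule sum_mono2) (auto intro: sum_nonneg)
  also have "\<dots> = (\<Sum>y\<in>G. c y powr r)"
    by (subst (2) G_Sigma) (simp add: sum.Sigma split_def)
  also have "\<dots> = hoelder_sum \<alpha> (prod_channel W1 W2) P"
    by (simp add: hoelder_sum_def G_def c_def r_def)
  finally show ?thesis .
qed

lemma U_alpha_prod_channel_ge:
  fixes W1 :: "'x1::finite \<Rightarrow> 'y1::finite \<Rightarrow> real" and W2 :: "'x2::finite \<Rightarrow> 'y2::finite \<Rightarrow> real"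
  assumes \<alpha>: "0 < \<alpha>" "\<alpha> \<noteq> 1" and W1: "is_channel W1" and W2: "is_channel W2"
  shows "U_alpha \<alpha> W1 + U_alpha \<alpha> W2 \<le> U_alpha \<alpha> (prod_channel W1 W2)"
proof -
  have "neg_ln (hoelder_sum \<alpha> W1 P1) + neg_ln (hoelder_sum \<alpha> W2 P2) \<le> U_alpha \<alpha> (prod_channel W1 W2)"
    if P1: "is_dist P1" and P2: "is_dist P2" for P1 P2
  proof -
    have "neg_ln (hoelder_sum \<alpha> W1 P1) + neg_ln (hoelder_sum \<alpha> W2 P2)
        = neg_ln (hoelder_sum \<alpha> (prod_channel W1 W2) (\<lambda>(x1, x2). P1 x1 * P2 x2))"
      by (simp add: hoelder_sum_prod_channel[OF P1 P2 W1 W2] neg_ln_mult hoelder_sum_nonneg)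
    also have "\<dots> \<le> U_alpha \<alpha> (prod_channel W1 W2)"
      using \<alpha> is_channel_prod_channel[OF W1 W2] is_dist_product[OF P1 P2]
      by (rule neg_ln_hoelder_sum_le_U_alpha)
    finally show ?thesis .
  qed
  then have "neg_ln (hoelder_sum \<alpha> W1 P1) + U_alpha \<alpha> W2 \<le> U_alpha \<alpha> (prod_channel W1 W2)"
    if "is_dist P1" for P1
    unfolding U_alpha_eq_SUP_neg_ln_hoelder_sum[OF \<alpha> W2] using that ex_is_dist
    by (subst SUP_ereal_add_right[symmetric]) (auto intro: SUP_least simp: neg_ln_not_MInfty)
  then show ?thesis
    unfolding U_alpha_eq_SUP_neg_ln_hoelder_sum[OF \<alpha> W1] using ex_is_dist U_alpha_not_MInfty[OF \<alpha> W2]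
    by (subst SUP_ereal_add_left[symmetric]) (auto intro: SUP_least)
qed

lemma U_alpha_prod_channel_le:
  fixes W1 :: "'x1::finite \<Rightarrow> 'y1::finite \<Rightarrow> real" and W2 :: "'x2::finite \<Rightarrow> 'y2::finite \<Rightarrow> real"
  assumes \<alpha>: "0 < \<alpha>" "\<alpha> \<noteq> 1" and W1: "is_channel W1" and W2: "is_channel W2"
  shows "U_alpha \<alpha> (prod_channel W1 W2) \<le> U_alpha \<alpha> W1 + U_alpha \<alpha> W2"
proof (cases "U_alpha \<alpha> W1 = \<infinity> \<or> U_alpha \<alpha> W2 = \<infinity>")
  case True
  then show ?thesis
    using U_alpha_not_MInfty[OF \<alpha> W1] U_alpha_not_MInfty[OF \<alpha> W2] by auto
next
  case False
  then obtain u1 u2 where u1: "U_alpha \<alpha> W1 = ereal u1" and u2: "U_alpha \<alpha> W2 = ereal u2"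
    using U_alpha_not_MInfty[OF \<alpha> W1] U_alpha_not_MInfty[OF \<alpha> W2] by (meson ereal_cases)
  have "neg_ln (hoelder_sum \<alpha> (prod_channel W1 W2) P) \<le> ereal (u1 + u2)" if P: "is_dist P" for P
  proof -
    have "exp (- (u1 + u2)) = exp (- u1) * exp (- u2)" by (simp add: exp_add[symmetric])
    also have "\<dots> \<le> hoelder_sum \<alpha> W1 (fst_marginal P) * exp (- u2)"
      using hoelder_sum_ge_exp_neg_U_alpha[OF \<alpha> W1 u1 is_dist_fst_marginal[OF P]] by simp
    also have "\<dots> \<le> hoelder_sum \<alpha> (prod_channel W1 W2) P"
      using hoelder_sum_ge_exp_neg_U_alpha[OF \<alpha> W2 u2] by (intro hoelder_sum_prod_channel_ge[OF P W1 W2]) auto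
    finally show ?thesis by (simp add: neg_ln_le_ereal_iff hoelder_sum_nonneg)
  qed
  then show ?thesis
    unfolding U_alpha_eq_SUP_neg_ln_hoelder_sum[OF \<alpha> is_channel_prod_channel[OF W1 W2]] u1 u2
    by (auto intro: SUP_least)
qed

theorem mainTheorem13:
  fixes \<alpha> :: real
    and W1 :: "'x1::finite \<Rightarrow> 'y1::finite \<Rightarrow> real"
    and W2 :: "'x2::finite \<Rightarrow> 'y2::finite \<Rightarrow> real"
  assumes "0 < \<alpha>" and "\<alpha> \<noteq> 1"
    and "is_channel W1" and "is_channel W2"
  shows "U_alpha \<alpha> (prod_channel W1 W2) = U_alpha \<alpha> W1 + U_alpha \<alpha> W2"
  using U_alpha_prod_channel_le[OF assms] U_alpha_prod_channel_ge[OF assms] by (rule order.antisym)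

end
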